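(* Let $d,k\ge 1$ be integers, let $\|\cdot\|$ be a norm on $\mathbb{R}^d$, let $\epsilon\ge 0$, and let $(X,Y)$ be a pair of random variables with values in $\mathbb{R}^d\times\mathbb{R}^k$. Let $\ell:\mathbb{R}^k\times\mathbb{R}^k\to\mathbb{R}_{\ge0}$ be a loss function and let $A,B:\mathbb{R}^k\times\mathbb{R}^k\to\mathbb{R}_{\ge 0}$ be functions with $A(u,u)=B(u,u)=0$ for all $u\in\mathbb{R}^k$ such that for all $u,v,u',v'\in\mathbb{R}^k$, $$\ell(u,v)+\ell(u',v')+A(u,u')\ge B(v,v')\quad\text{and}\quad \ell(u,v)+\ell(u',v')+A(v,v')\ge B(u,u').$$ Let $\mathcal{F}$ be a class of functions from $\mathbb{R}^d$ to $\mathbb{R}^k$. Then for every $f\in\mathcal{F}$, $$R(f)+R_\epsilon(f)\ge \max\left\{\mathbb{E}\left(\sup_{\Delta:\|\Delta\|\le\epsilon} B\big(f(X),f(X+\Delta)\big)\right),\ \mathbb{E}\,B(Y,Y')\right\},$$ where $Y'$ is a random variable such that, conditioned on $X$, $Y'$ is independent of $Y$ and has the same conditional distribution as $Y$ given $X$.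
   Context: The standard risk of $f$ is $R(f)=\mathbb{E}\,\ell(f(X),Y)$ and its adversarial risk is $R_\epsilon(f)=\mathbb{E}\left(\sup_{\Delta\in\mathbb{R}^d:\|\Delta\|\le\epsilon}\ell(f(X+\Delta),Y)\right)$. All expectations are assumed to be well defined (possibly $+\infty$). *)

theory Defs
  imports "HOL-Probability.Probability"
begin

definition is_norm :: "('a::real_vector \<Rightarrow> real) \<Rightarrow> bool" where
  "is_norm N \<longleftrightarrow> (\<forall>x. N x \<ge> 0) \<and> (\<forall>x. N x = 0 \<longleftrightarrow> x = 0)
     \<and> (\<forall>c x. N (c *\<^sub>R x) = \<bar>c\<bar> * N x) \<and> (\<forall>x y. N (x + y) \<le> N x + N y)"

definition std_risk :: "'w measure \<Rightarrow> ('b \<Rightarrow> 'b \<Rightarrow> real) \<Rightarrow> ('a \<Rightarrow> 'b)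
    \<Rightarrow> ('w \<Rightarrow> 'a) \<Rightarrow> ('w \<Rightarrow> 'b) \<Rightarrow> ennreal" where
  "std_risk M l f X Y = (\<integral>\<^sup>+ \<omega>. ennreal (l (f (X \<omega>)) (Y \<omega>)) \<partial>M)"

definition adv_risk :: "'w measure \<Rightarrow> ('a::real_vector \<Rightarrow> real) \<Rightarrow> real
    \<Rightarrow> ('b \<Rightarrow> 'b \<Rightarrow> real) \<Rightarrow> ('a \<Rightarrow> 'b) \<Rightarrow> ('w \<Rightarrow> 'a) \<Rightarrow> ('w \<Rightarrow> 'b) \<Rightarrow> ennreal" where
  "adv_risk M N eps l f X Y =
     (\<integral>\<^sup>+ \<omega>. (SUP \<Delta>\<in>{\<Delta>. N \<Delta> \<le> eps}. ennreal (l (f (X \<omega> + \<Delta>)) (Y \<omega>))) \<partial>M)"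

text \<open>Y' is, conditionally on X, independent of Y and has the same conditional
  distribution as Y given X (conditioning on the sigma-algebra generated by X).\<close>
definition cond_iid_copy :: "'w measure \<Rightarrow> ('w \<Rightarrow> 'a::topological_space)
    \<Rightarrow> ('w \<Rightarrow> 'b::topological_space) \<Rightarrow> ('w \<Rightarrow> 'b) \<Rightarrow> bool" where
  "cond_iid_copy M X Y Y' \<longleftrightarrow>
     (let G = vimage_algebra (space M) X borel in
      (\<forall>S\<in>sets borel. \<forall>T\<in>sets borel.
         AE \<omega> in M. real_cond_exp M G (\<lambda>\<omega>. indicator S (Y \<omega>) * indicator T (Y' \<omega>)) \<omega>
           = real_cond_exp M G (\<lambda>\<omega>. indicator S (Y \<omega>)) \<omega>
             * real_cond_exp M G (\<lambda>\<omega>. indicator T (Y' \<omega>)) \<omega>)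
      \<and> (\<forall>S\<in>sets borel.
         AE \<omega> in M. real_cond_exp M G (\<lambda>\<omega>. indicator S (Y \<omega>)) \<omega>
           = real_cond_exp M G (\<lambda>\<omega>. indicator S (Y' \<omega>)) \<omega>))"

end

theory Submission
  imports Defs
begin

text \<open>The two hypotheses on \<open>l\<close>, specialised to a repeated argument where \<open>A\<close> vanishes,
  give two triangle-type bounds. With \<open>v = v' = Y\<close>, \<open>B(f X, f (X + \<Delta>))\<close> is at most
  \<open>l(f X, Y) + l(f (X + \<Delta>), Y)\<close>, whose supremum over \<open>\<Delta>\<close> integrates to at most
  \<open>R(f) + R\<^sub>\<epsilon>(f)\<close>. With \<open>u = u' = f X\<close>, \<open>B(Y, Y')\<close> is at most \<open>l(f X, Y) + l(f X, Y')\<close>;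
  as \<open>Y'\<close> has the conditional law of \<open>Y\<close> given \<open>X\<close>, the pairs \<open>(X, Y)\<close> and \<open>(X, Y')\<close> have the
  same joint law, so both terms integrate to \<open>R(f)\<close>, and \<open>R(f) \<le> R\<^sub>\<epsilon>(f)\<close> because
  \<open>\<Delta> = 0\<close> is admissible.\<close>

lemma borel_measurable_case_prod_compose:
  fixes g :: "'a::second_countable_topology \<Rightarrow> 'b::second_countable_topology \<Rightarrow> 'c::topological_space"
  assumes "case_prod g \<in> borel_measurable borel"
    and "U \<in> borel_measurable M" "V \<in> borel_measurable M"
  shows "(\<lambda>\<omega>. g (U \<omega>) (V \<omega>)) \<in> borel_measurable M"
  using assms by (simp add: borel_prod[symmetric])

lemma (in finite_measure) emeasure_distr_Pair_Times:
  assumes [measurable]: "X \<in> M \<rightarrow>\<^sub>M MX" "Y \<in> M \<rightarrow>\<^sub>M MY"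
    and [measurable]: "C \<in> sets MX" "S \<in> sets MY"
  shows "emeasure (distr M (MX \<Otimes>\<^sub>M MY) (\<lambda>\<omega>. (X \<omega>, Y \<omega>))) (C \<times> S)
    = ennreal (\<integral>\<omega>\<in>X -` C \<inter> space M. indicator S (Y \<omega>) \<partial>M)"
proof -
  have "emeasure (distr M (MX \<Otimes>\<^sub>M MY) (\<lambda>\<omega>. (X \<omega>, Y \<omega>))) (C \<times> S)
      = measure M ((\<lambda>\<omega>. (X \<omega>, Y \<omega>)) -` (C \<times> S) \<inter> space M)"
    by (simp add: emeasure_distr emeasure_eq_measure)
  also have "measure M ((\<lambda>\<omega>. (X \<omega>, Y \<omega>)) -` (C \<times> S) \<inter> space M)
      = (\<integral>\<omega>. indicator ((\<lambda>\<omega>. (X \<omega>, Y \<omega>)) -` (C \<times> S) \<inter> space M) \<omega> \<partial>M)"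
    by simp
  also have "\<dots> = (\<integral>\<omega>\<in>X -` C \<inter> space M. indicator S (Y \<omega>) \<partial>M)"
    unfolding set_lebesgue_integral_def
    by (rule Bochner_Integration.integral_cong) (auto simp: indicator_def)
  finally show ?thesis .
qed

lemma (in finite_measure) distr_Pair_eq_if_cond_exp_indicator_eq:
  assumes [measurable]: "X \<in> M \<rightarrow>\<^sub>M MX" "Y \<in> M \<rightarrow>\<^sub>M MY" "Y' \<in> M \<rightarrow>\<^sub>M MY"
    and same_cond_law: "\<And>S. S \<in> sets MY \<Longrightarrow> AE \<omega> in M.
      real_cond_exp M (vimage_algebra (space M) X MX) (\<lambda>\<omega>. indicator S (Y \<omega>)) \<omega>
      = real_cond_exp M (vimage_algebra (space M) X MX) (\<lambda>\<omega>. indicator S (Y' \<omega>)) \<omega>"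
  shows "distr M (MX \<Otimes>\<^sub>M MY) (\<lambda>\<omega>. (X \<omega>, Y \<omega>)) = distr M (MX \<Otimes>\<^sub>M MY) (\<lambda>\<omega>. (X \<omega>, Y' \<omega>))"
proof -
  let ?G = "vimage_algebra (space M) X MX"
  have G_sets: "sets ?G \<subseteq> sets M"
    using sets_image_in_sets[OF refl assms(1)] .
  interpret finite_measure_subalgebra M ?G
    using G_sets by unfold_locales (simp add: subalgebra_def)
  let ?E = "{C \<times> S | C S. C \<in> sets MX \<and> S \<in> sets MY}"
  let ?\<Omega> = "space MX \<times> space MY"
  show ?thesis
  proof (rule measure_eqI_generator_eq[where E = ?E and \<Omega> = ?\<Omega> and A = "\<lambda>_. ?\<Omega>"])
    fix R assume "R \<in> ?E"
    then obtain C S where R: "R = C \<times> S" and [measurable]: "C \<in> sets MX" "S \<in> sets MY"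
      by auto
    let ?A = "X -` C \<inter> space M"
    have A: "?A \<in> sets ?G"
      by (rule in_vimage_algebra) simp
    have integrable: "integrable M (\<lambda>\<omega>. indicator S (Z \<omega>) :: real)" if "Z \<in> M \<rightarrow>\<^sub>M MY" for Z
      using that by (intro integrable_const_bound[where B = 1] AE_I2) simp_all
    have "(\<integral>\<omega>\<in>?A. indicator S (Y \<omega>) \<partial>M)
        = (\<integral>\<omega>\<in>?A. real_cond_exp M ?G (\<lambda>\<omega>. indicator S (Y \<omega>)) \<omega> \<partial>M)"
      by (rule real_cond_exp_intA[OF integrable A]) simp
    also have "\<dots> = (\<integral>\<omega>\<in>?A. real_cond_exp M ?G (\<lambda>\<omega>. indicator S (Y' \<omega>)) \<omega> \<partial>M)"
      using same_cond_law[of S] G_sets A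
      by (intro set_lebesgue_integral_cong_AE) auto
    also have "\<dots> = (\<integral>\<omega>\<in>?A. indicator S (Y' \<omega>) \<partial>M)"
      by (rule real_cond_exp_intA[OF integrable A, symmetric]) simp
    finally have "(\<integral>\<omega>\<in>?A. indicator S (Y \<omega>) \<partial>M) = (\<integral>\<omega>\<in>?A. indicator S (Y' \<omega>) \<partial>M :: real)" .
    then show "emeasure (distr M (MX \<Otimes>\<^sub>M MY) (\<lambda>\<omega>. (X \<omega>, Y \<omega>))) R
        = emeasure (distr M (MX \<Otimes>\<^sub>M MY) (\<lambda>\<omega>. (X \<omega>, Y' \<omega>))) R"
      unfolding R by (simp only: emeasure_distr_Pair_Times assms(1-3) \<open>C \<in> sets MX\<close> \<open>S \<in> sets MY\<close>)
  next
    show "emeasure (distr M (MX \<Otimes>\<^sub>M MY) (\<lambda>\<omega>. (X \<omega>, Y \<omega>))) ?\<Omega> \<noteq> \<infinity>"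
      by (simp add: emeasure_distr)
  next
    show "Int_stable ?E" by (rule Int_stable_pair_measure_generator)
    show "?E \<subseteq> Pow ?\<Omega>" by (auto dest: sets.sets_into_space)
    show "sets (distr M (MX \<Otimes>\<^sub>M MY) (\<lambda>\<omega>. (X \<omega>, Y \<omega>))) = sigma_sets ?\<Omega> ?E"
      by (simp add: sets_pair_measure)
    show "sets (distr M (MX \<Otimes>\<^sub>M MY) (\<lambda>\<omega>. (X \<omega>, Y' \<omega>))) = sigma_sets ?\<Omega> ?E"
      by (simp add: sets_pair_measure)
    show "range (\<lambda>_. ?\<Omega>) \<subseteq> ?E" by blast
  qed simp
qed

lemma std_risk_le_adv_risk:
  assumes "is_norm N" and "0 \<le> eps"
  shows "std_risk M l f X Y \<le> adv_risk M N eps l f X Y"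
  unfolding std_risk_def adv_risk_def
proof (rule nn_integral_mono)
  have "N 0 = 0"
    using assms(1) unfolding is_norm_def by blast
  with assms(2) have "N 0 \<le> eps"
    by simp
  then show "ennreal (l (f (X \<omega>)) (Y \<omega>)) \<le> (SUP \<Delta>\<in>{\<Delta>. N \<Delta> \<le> eps}. ennreal (l (f (X \<omega> + \<Delta>)) (Y \<omega>)))"
    for \<omega>
    by (intro SUP_upper2[where i = 0]) simp_all
qed

lemma nn_integral_SUP_le_std_risk_add_adv_risk:
  assumes B_le: "\<And>u u' v. B u u' \<le> l u v + l u' v"
    and l_nonneg: "\<And>u v. 0 \<le> l u v"
    and "(\<lambda>\<omega>. l (f (X \<omega>)) (Y \<omega>)) \<in> borel_measurable M"
    and "(\<lambda>\<omega>. SUP \<Delta>\<in>{\<Delta>. N \<Delta> \<le> eps}. ennreal (l (f (X \<omega> + \<Delta>)) (Y \<omega>))) \<in> borel_measurable M"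
  shows "(\<integral>\<^sup>+ \<omega>. (SUP \<Delta>\<in>{\<Delta>. N \<Delta> \<le> eps}. ennreal (B (f (X \<omega>)) (f (X \<omega> + \<Delta>)))) \<partial>M)
    \<le> std_risk M l f X Y + adv_risk M N eps l f X Y"
proof -
  let ?D = "{\<Delta>. N \<Delta> \<le> eps}"
  have "(\<integral>\<^sup>+ \<omega>. (SUP \<Delta>\<in>?D. ennreal (B (f (X \<omega>)) (f (X \<omega> + \<Delta>)))) \<partial>M)
      \<le> (\<integral>\<^sup>+ \<omega>. ennreal (l (f (X \<omega>)) (Y \<omega>)) + (SUP \<Delta>\<in>?D. ennreal (l (f (X \<omega> + \<Delta>)) (Y \<omega>))) \<partial>M)"
  proof (intro nn_integral_mono SUP_least)
    fix \<omega> \<Delta> assume "\<Delta> \<in> ?D"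
    have "ennreal (B (f (X \<omega>)) (f (X \<omega> + \<Delta>)))
        \<le> ennreal (l (f (X \<omega>)) (Y \<omega>)) + ennreal (l (f (X \<omega> + \<Delta>)) (Y \<omega>))"
      using B_le l_nonneg by (simp add: ennreal_plus[symmetric] del: ennreal_plus)
    also have "\<dots> \<le> ennreal (l (f (X \<omega>)) (Y \<omega>)) + (SUP \<Delta>\<in>?D. ennreal (l (f (X \<omega> + \<Delta>)) (Y \<omega>)))"
      using \<open>\<Delta> \<in> ?D\<close> by (intro add_left_mono SUP_upper)
    finally show "ennreal (B (f (X \<omega>)) (f (X \<omega> + \<Delta>))) \<le> \<dots>" .
  qed
  also have "\<dots> = std_risk M l f X Y + adv_risk M N eps l f X Y"
    unfolding std_risk_def adv_risk_def using assms(3,4) by (intro nn_integral_add) simp_all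
  finally show ?thesis .
qed

lemma (in finite_measure) std_risk_cond_iid_copy:
  fixes X :: "'a \<Rightarrow> 'x::second_countable_topology"
    and Y Y' :: "'a \<Rightarrow> 'y::second_countable_topology"
  assumes [measurable]: "X \<in> borel_measurable M" "Y \<in> borel_measurable M" "Y' \<in> borel_measurable M"
    and "cond_iid_copy M X Y Y'"
    and "case_prod l \<in> borel_measurable borel" and [measurable]: "f \<in> borel_measurable borel"
  shows "std_risk M l f X Y' = std_risk M l f X Y"
proof -
  have [measurable]: "(\<lambda>p. l (f (fst p)) (snd p)) \<in> borel_measurable (borel \<Otimes>\<^sub>M borel)"
    using assms(5) by (rule borel_measurable_case_prod_compose) simp_all
  have same_law: "distr M (borel \<Otimes>\<^sub>M borel) (\<lambda>\<omega>. (X \<omega>, Y' \<omega>))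
      = distr M (borel \<Otimes>\<^sub>M borel) (\<lambda>\<omega>. (X \<omega>, Y \<omega>))"
    using assms(4) unfolding cond_iid_copy_def Let_def
    by (intro distr_Pair_eq_if_cond_exp_indicator_eq[symmetric]) simp_all
  let ?g = "\<lambda>p. ennreal (l (f (fst p)) (snd p))"
  have "std_risk M l f X Y' = (\<integral>\<^sup>+ p. ?g p \<partial>distr M (borel \<Otimes>\<^sub>M borel) (\<lambda>\<omega>. (X \<omega>, Y' \<omega>)))"
    unfolding std_risk_def by (subst nn_integral_distr) simp_all
  also have "\<dots> = (\<integral>\<^sup>+ p. ?g p \<partial>distr M (borel \<Otimes>\<^sub>M borel) (\<lambda>\<omega>. (X \<omega>, Y \<omega>)))"
    by (simp only: same_law)
  also have "\<dots> = std_risk M l f X Y"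
    unfolding std_risk_def by (subst nn_integral_distr) simp_all
  finally show ?thesis .
qed

lemma (in finite_measure) nn_integral_cond_iid_copy_le_twice_std_risk:
  fixes X :: "'a \<Rightarrow> 'x::second_countable_topology"
    and Y Y' :: "'a \<Rightarrow> 'y::second_countable_topology"
  assumes [measurable]: "X \<in> borel_measurable M" "Y \<in> borel_measurable M" "Y' \<in> borel_measurable M"
    and "cond_iid_copy M X Y Y'"
    and "case_prod l \<in> borel_measurable borel" and [measurable]: "f \<in> borel_measurable borel"
    and B_le: "\<And>u v v'. B v v' \<le> l u v + l u v'"
    and l_nonneg: "\<And>u v. 0 \<le> l u v"
  shows "(\<integral>\<^sup>+ \<omega>. ennreal (B (Y \<omega>) (Y' \<omega>)) \<partial>M) \<le> 2 * std_risk M l f X Y"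
proof -
  have [measurable]: "(\<lambda>\<omega>. l (f (X \<omega>)) (Z \<omega>)) \<in> borel_measurable M"
    if [measurable]: "Z \<in> borel_measurable M" for Z :: "'a \<Rightarrow> 'y"
    using assms(5) by (rule borel_measurable_case_prod_compose) simp_all
  have "(\<integral>\<^sup>+ \<omega>. ennreal (B (Y \<omega>) (Y' \<omega>)) \<partial>M)
      \<le> (\<integral>\<^sup>+ \<omega>. ennreal (l (f (X \<omega>)) (Y \<omega>)) + ennreal (l (f (X \<omega>)) (Y' \<omega>)) \<partial>M)"
    using B_le l_nonneg
    by (intro nn_integral_mono) (simp add: ennreal_plus[symmetric] del: ennreal_plus)
  also have "\<dots> = std_risk M l f X Y + std_risk M l f X Y'"
    unfolding std_risk_def by (intro nn_integral_add) simp_all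
  also have "\<dots> = 2 * std_risk M l f X Y"
    using std_risk_cond_iid_copy[OF assms(1-6)] by (simp add: mult_2)
  finally show ?thesis .
qed

theorem theorem1:
  fixes M :: "'w measure"
    and N :: "'a::euclidean_space \<Rightarrow> real"
    and eps :: real
    and X :: "'w \<Rightarrow> 'a"
    and Y Y' :: "'w \<Rightarrow> 'b::euclidean_space"
    and l A B :: "'b \<Rightarrow> 'b \<Rightarrow> real"
    and F :: "('a \<Rightarrow> 'b) set"
    and f :: "'a \<Rightarrow> 'b"
  assumes "prob_space M"
    and "is_norm N"
    and "eps \<ge> 0"
    and "X \<in> borel_measurable M" and "Y \<in> borel_measurable M" and "Y' \<in> borel_measurable M"
    and "cond_iid_copy M X Y Y'"
    and "\<forall>u v. l u v \<ge> 0" and "\<forall>u v. A u v \<ge> 0" and "\<forall>u v. B u v \<ge> 0"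
    and "\<forall>u. A u u = 0" and "\<forall>u. B u u = 0"
    and "\<forall>u v u' v'. l u v + l u' v' + A u u' \<ge> B v v'"
    and "\<forall>u v u' v'. l u v + l u' v' + A v v' \<ge> B u u'"
    and "case_prod l \<in> borel_measurable borel"
    and "case_prod B \<in> borel_measurable borel"
    and "f \<in> F"
    and "f \<in> borel_measurable borel"
    and "(\<lambda>\<omega>. SUP \<Delta>\<in>{\<Delta>. N \<Delta> \<le> eps}. ennreal (l (f (X \<omega> + \<Delta>)) (Y \<omega>))) \<in> borel_measurable M"
    and "(\<lambda>\<omega>. SUP \<Delta>\<in>{\<Delta>. N \<Delta> \<le> eps}. ennreal (B (f (X \<omega>)) (f (X \<omega> + \<Delta>)))) \<in> borel_measurable M"
  shows "std_risk M l f X Y + adv_risk M N eps l f X Y \<ge>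
           max (\<integral>\<^sup>+ \<omega>. (SUP \<Delta>\<in>{\<Delta>. N \<Delta> \<le> eps}. ennreal (B (f (X \<omega>)) (f (X \<omega> + \<Delta>)))) \<partial>M)
               (\<integral>\<^sup>+ \<omega>. ennreal (B (Y \<omega>) (Y' \<omega>)) \<partial>M)"
proof -
  \<comment> \<open>The sign of \<open>A\<close> and \<open>B\<close>, \<open>B u u = 0\<close> and the measurability of the \<open>B\<close>-terms are not
    needed: negative values are truncated by \<open>ennreal\<close>, and only monotonicity of \<open>\<integral>\<^sup>+\<close> is used there.\<close>
  interpret prob_space M by fact
  have B_le_adv: "B u u' \<le> l u v + l u' v" for u u' v
    using assms(11,14) by (metis add_0_right)
  have B_le_copy: "B v v' \<le> l u v + l u v'" for u v v'
    using assms(11,13) by (metis add_0_right)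
  have "(\<lambda>\<omega>. l (f (X \<omega>)) (Y \<omega>)) \<in> borel_measurable M"
    using assms(15) by (rule borel_measurable_case_prod_compose) (use assms(4,5,18) in simp_all)
  then have "(\<integral>\<^sup>+ \<omega>. (SUP \<Delta>\<in>{\<Delta>. N \<Delta> \<le> eps}. ennreal (B (f (X \<omega>)) (f (X \<omega> + \<Delta>)))) \<partial>M)
      \<le> std_risk M l f X Y + adv_risk M N eps l f X Y"
    using B_le_adv assms(8,19) by (intro nn_integral_SUP_le_std_risk_add_adv_risk) simp_all
  moreover have "(\<integral>\<^sup>+ \<omega>. ennreal (B (Y \<omega>) (Y' \<omega>)) \<partial>M) \<le> 2 * std_risk M l f X Y"
    using assms(8) by (intro nn_integral_cond_iid_copy_le_twice_std_risk[OF assms(4-7,15,18) B_le_copy]) blast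
  moreover have "2 * std_risk M l f X Y \<le> std_risk M l f X Y + adv_risk M N eps l f X Y"
    unfolding mult_2 using std_risk_le_adv_risk[OF assms(2,3)] by (rule add_left_mono)
  ultimately show ?thesis
    by (auto intro: order.trans)
qed

end
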